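(* Under the standing assumptions below, for each $i$ the category $D(\varepsilon_{a_i})$ is full in $R$: every arrow of $Q$ (and more generally every morphism of $R$) between two vertices of $D(\varepsilon_{a_i})$ belongs to $D(\varepsilon_{a_i})$.
   Context: Standing assumptions: $R=kQ/I$ is a string algebra (I generated by paths; each vertex has at most two incoming and two outgoing arrows; for each arrow $\alpha:x\to y$ at most one arrow $\beta$ from $y$ with $\alpha\beta\notin I$ and at most one arrow $\gamma$ into $x$ with $\gamma\alpha\notin I$; paths composed left to right) with no DOZE, $Q$ contains a band, and every band has either only exiting arrows or only entering arrows, and $Q$ is not just a single band without entering or exiting arrows. A walk is a sequence of arrows and inverse arrows, reduced if no subwalk $\alpha\alpha^{-1}$ or $\alpha^{-1}\alpha$; a string is a reduced walk with no zero-relation; a band is a cyclic string, not a power of another, all of whose powers are strings. Arrows entering/exiting a band are arrows not on the band with target/source on the band. A double-zero is a reduced walk $\rho_1\nu\rho_2$ with $\rho_1,\rho_2$ paths in $I$ traversed along their arrows; a DOZE is a double-zero $\rho_1\omega_1\omega_2\omega_3\rho_2$ with $\omega_2$ a band. Let $\Theta_1,\dots,\Theta_n$ be the bands (up to cyclic permutation) having only exiting arrows; on each $\Theta_i$ choose a vertex $a_i$ such that all arrows starting at $a_i$ belong to $\Theta_i$. For a string $\omega$, $W(\omega)$ is the set of strings of the form $\omega_1\omega\omega_2$, and $D(\omega)$ is the subcategory whose objects are the vertices through which some string of $W(\omega)$ passes and whose morphisms are generated by the arrows through which some string of $W(\omega)$ passes. $\varepsilon_{a}$ denotes the trivial path at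 $a$. *)

theory Defs
  imports Main "HOL-Library.Sublist"
begin

text \<open>A bound quiver (Q, I) with I generated by a set of paths (monomial relations).
Paths are lists of arrows composed left to right.\<close>

record ('v, 'a) bquiver =
  qv   :: "'v set"
  qa   :: "'a set"
  qs   :: "'a \<Rightarrow> 'v"
  qt   :: "'a \<Rightarrow> 'v"
  qrel :: "'a list set"

fun path_from :: "('v,'a) bquiver \<Rightarrow> 'v \<Rightarrow> 'a list \<Rightarrow> bool" where
  "path_from Q x [] = (x \<in> qv Q)"
| "path_from Q x (\<alpha> # ps) = (\<alpha> \<in> qa Q \<and> qs Q \<alpha> = x \<and> path_from Q (qt Q \<alpha>) ps)"

fun path_end :: "('v,'a) bquiver \<Rightarrow> 'v \<Rightarrow> 'a list \<Rightarrow> 'v" where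
  "path_end Q x [] = x"
| "path_end Q x (\<alpha> # ps) = path_end Q (qt Q \<alpha>) ps"

text \<open>Since I is generated by paths, a path lies in I iff it contains a generator as a subpath.\<close>
definition in_I :: "('v,'a) bquiver \<Rightarrow> 'a list \<Rightarrow> bool" where
  "in_I Q p \<longleftrightarrow> (\<exists>r\<in>qrel Q. sublist r p)"

text \<open>Letters: (alpha, True) is the arrow alpha, (alpha, False) its formal inverse.\<close>
type_synonym 'a letter = "'a \<times> bool"

fun lsrc :: "('v,'a) bquiver \<Rightarrow> 'a letter \<Rightarrow> 'v" where
  "lsrc Q (\<alpha>, d) = (if d then qs Q \<alpha> else qt Q \<alpha>)"

fun ltgt :: "('v,'a) bquiver \<Rightarrow> 'a letter \<Rightarrow> 'v" where
  "ltgt Q (\<alpha>, d) = (if d then qt Q \<alpha> else qs Q \<alpha>)"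

text \<open>A walk is a start vertex together with a list of letters (empty list = trivial walk).\<close>
type_synonym ('v, 'a) walk = "'v \<times> 'a letter list"

fun walk_from :: "('v,'a) bquiver \<Rightarrow> 'v \<Rightarrow> 'a letter list \<Rightarrow> bool" where
  "walk_from Q x [] = (x \<in> qv Q)"
| "walk_from Q x (l # ls) = (fst l \<in> qa Q \<and> lsrc Q l = x \<and> walk_from Q (ltgt Q l) ls)"

fun wend_from :: "('v,'a) bquiver \<Rightarrow> 'v \<Rightarrow> 'a letter list \<Rightarrow> 'v" where
  "wend_from Q x [] = x"
| "wend_from Q x (l # ls) = wend_from Q (ltgt Q l) ls"

definition is_walk :: "('v,'a) bquiver \<Rightarrow> ('v,'a) walk \<Rightarrow> bool" where
  "is_walk Q w \<longleftrightarrow> walk_from Q (fst w) (snd w)"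

definition wend :: "('v,'a) bquiver \<Rightarrow> ('v,'a) walk \<Rightarrow> 'v" where
  "wend Q w = wend_from Q (fst w) (snd w)"

definition reduced :: "'a letter list \<Rightarrow> bool" where
  "reduced ls \<longleftrightarrow> (\<forall>i. Suc i < length ls \<longrightarrow>
      \<not> (fst (ls ! i) = fst (ls ! Suc i) \<and> snd (ls ! i) \<noteq> snd (ls ! Suc i)))"

definition no_zero_rel :: "('v,'a) bquiver \<Rightarrow> 'a letter list \<Rightarrow> bool" where
  "no_zero_rel Q ls \<longleftrightarrow> (\<forall>u. sublist u ls \<longrightarrow>
      \<not> ((\<forall>l\<in>set u. snd l) \<and> in_I Q (map fst u)) \<and>
      \<not> ((\<forall>l\<in>set u. \<not> snd l) \<and> in_I Q (rev (map fst u))))"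

definition is_string :: "('v,'a) bquiver \<Rightarrow> ('v,'a) walk \<Rightarrow> bool" where
  "is_string Q w \<longleftrightarrow> is_walk Q w \<and> reduced (snd w) \<and> no_zero_rel Q (snd w)"

definition wpow :: "('v,'a) walk \<Rightarrow> nat \<Rightarrow> ('v,'a) walk" where
  "wpow w n = (fst w, concat (replicate n (snd w)))"

definition is_band :: "('v,'a) bquiver \<Rightarrow> ('v,'a) walk \<Rightarrow> bool" where
  "is_band Q w \<longleftrightarrow> snd w \<noteq> [] \<and> is_string Q w \<and> wend Q w = fst w \<and>
     (\<forall>n\<ge>1. is_string Q (wpow w n)) \<and>
     \<not> (\<exists>u k. k \<ge> 2 \<and> snd w = concat (replicate k u))"

definition wverts :: "('v,'a) bquiver \<Rightarrow> ('v,'a) walk \<Rightarrow> 'v set" where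
  "wverts Q w = insert (fst w) (ltgt Q ` set (snd w))"

definition warrs :: "('v,'a) walk \<Rightarrow> 'a set" where
  "warrs w = fst ` set (snd w)"

definition exiting :: "('v,'a) bquiver \<Rightarrow> ('v,'a) walk \<Rightarrow> 'a \<Rightarrow> bool" where
  "exiting Q B \<alpha> \<longleftrightarrow> \<alpha> \<in> qa Q \<and> \<alpha> \<notin> warrs B \<and> qs Q \<alpha> \<in> wverts Q B"

definition entering :: "('v,'a) bquiver \<Rightarrow> ('v,'a) walk \<Rightarrow> 'a \<Rightarrow> bool" where
  "entering Q B \<alpha> \<longleftrightarrow> \<alpha> \<in> qa Q \<and> \<alpha> \<notin> warrs B \<and> qt Q \<alpha> \<in> wverts Q B"

definition dir :: "'a list \<Rightarrow> 'a letter list" where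
  "dir p = map (\<lambda>\<alpha>. (\<alpha>, True)) p"

text \<open>DOZE: a reduced walk rho1 omega1 omega2 omega3 rho2 with rho1, rho2 paths in I
traversed along their arrows and omega2 a band.\<close>
definition is_DOZE :: "('v,'a) bquiver \<Rightarrow> ('v,'a) walk \<Rightarrow> bool" where
  "is_DOZE Q w \<longleftrightarrow> is_walk Q w \<and> reduced (snd w) \<and>
     (\<exists>r1 o1 o2 o3 r2. snd w = dir r1 @ o1 @ o2 @ o3 @ dir r2 \<and> in_I Q r1 \<and> in_I Q r2 \<and>
        is_band Q (wend_from Q (fst w) (dir r1 @ o1), o2))"

definition string_algebra :: "('v,'a) bquiver \<Rightarrow> bool" where
  "string_algebra Q \<longleftrightarrow>
     finite (qv Q) \<and> finite (qa Q) \<and>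
     (\<forall>\<alpha>\<in>qa Q. qs Q \<alpha> \<in> qv Q \<and> qt Q \<alpha> \<in> qv Q) \<and>
     (\<forall>r\<in>qrel Q. length r \<ge> 2 \<and> path_from Q (qs Q (hd r)) r) \<and>
     (\<forall>x\<in>qv Q. card {\<alpha>\<in>qa Q. qs Q \<alpha> = x} \<le> 2 \<and> card {\<alpha>\<in>qa Q. qt Q \<alpha> = x} \<le> 2) \<and>
     (\<forall>\<alpha>\<in>qa Q. (\<forall>\<beta>\<in>qa Q. \<forall>\<beta>'\<in>qa Q. qs Q \<beta> = qt Q \<alpha> \<and> qs Q \<beta>' = qt Q \<alpha> \<and>
                   \<not> in_I Q [\<alpha>, \<beta>] \<and> \<not> in_I Q [\<alpha>, \<beta>'] \<longrightarrow> \<beta> = \<beta>') \<and>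
                (\<forall>\<gamma>\<in>qa Q. \<forall>\<gamma>'\<in>qa Q. qt Q \<gamma> = qs Q \<alpha> \<and> qt Q \<gamma>' = qs Q \<alpha> \<and>
                   \<not> in_I Q [\<gamma>, \<alpha>] \<and> \<not> in_I Q [\<gamma>', \<alpha>] \<longrightarrow> \<gamma> = \<gamma>'))"

definition Wstr :: "('v,'a) bquiver \<Rightarrow> ('v,'a) walk \<Rightarrow> ('v,'a) walk set" where
  "Wstr Q w = {s. is_string Q s \<and> (\<exists>u v. is_walk Q u \<and> is_walk Q v \<and>
       wend Q u = fst w \<and> wend Q w = fst v \<and> s = (fst u, snd u @ snd w @ snd v))}"

definition D_obj :: "('v,'a) bquiver \<Rightarrow> ('v,'a) walk \<Rightarrow> 'v set" where
  "D_obj Q w = (\<Union>s\<in>Wstr Q w. wverts Q s)"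

definition D_arr :: "('v,'a) bquiver \<Rightarrow> ('v,'a) walk \<Rightarrow> 'a set" where
  "D_arr Q w = (\<Union>s\<in>Wstr Q w. warrs s)"

end

theory Submission
  imports Defs
begin

(*
  D(e_a) consists of the vertices and arrows of the strings starting at a (a string through a
  can be cut at a and its first half inverted).  Fullness therefore says: if P is a path not in
  I whose endpoints x and x' are reached by strings w and w' from a, then every arrow of P lies
  on some string from a.  We prove this by induction on the length of P.  If w ends with the
  inverse of the first arrow of P, or w' ends with the last arrow of P, we peel that arrow off
  and use the induction hypothesis.  Otherwise w.P is reduced; if it is a string we are done,
  and otherwise w ends with a path p such that p.P contains a relation.  The heart of the proof
  (lemma reaching_last_arrow) shows that then some string from a ends with the inverse of the
  last arrow of P, which again lets us peel it off: otherwise, going from the end of p.P back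
  along w' to the band, once around the band, and along w to the start of p produces a walk
  (p.P) omega1 Theta omega3 (p.P)  that is a DOZE.  Besides the absence of DOZEs, only the facts
  that a lies on a band and that relations have length at least two are needed.
*)

section \<open>Letters, inverse walks and reducedness\<close>

definition linv :: "'a letter \<Rightarrow> 'a letter" where
  "linv l = (fst l, \<not> snd l)"

definition revw :: "'a letter list \<Rightarrow> 'a letter list" where
  "revw ls = rev (map linv ls)"

definition compat :: "'a letter \<Rightarrow> 'a letter \<Rightarrow> bool" where
  "compat l1 l2 \<longleftrightarrow> \<not> (fst l1 = fst l2 \<and> snd l1 \<noteq> snd l2)"

lemma linv_linv[simp]: "linv (linv l) = l"
  by (simp add: linv_def)

lemma fst_linv[simp]: "fst (linv l) = fst l" and snd_linv[simp]: "snd (linv l) = (\<not> snd l)"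
  by (simp_all add: linv_def)

lemma linv_eq_iff[simp]: "linv x = linv y \<longleftrightarrow> x = y"
  by (metis linv_linv)

lemma compat_iff: "compat l1 l2 \<longleftrightarrow> l2 \<noteq> linv l1"
  by (cases l1; cases l2) (auto simp: compat_def linv_def)

lemma compat_linv: "compat (linv l1) (linv l2) \<longleftrightarrow> compat l2 l1"
  by (auto simp: compat_def)

lemma revw_Nil[simp]: "revw [] = []"
  and revw_Cons[simp]: "revw (l # ls) = revw ls @ [linv l]"
  and revw_append[simp]: "revw (xs @ ys) = revw ys @ revw xs"
  and revw_revw[simp]: "revw (revw xs) = xs"
  and revw_eq_Nil[simp]: "revw xs = [] \<longleftrightarrow> xs = []"
  by (auto simp: revw_def rev_map comp_def)

lemma hd_revw: "xs \<noteq> [] \<Longrightarrow> hd (revw xs) = linv (last xs)"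
  by (simp add: revw_def hd_rev last_map)

lemma last_revw: "xs \<noteq> [] \<Longrightarrow> last (revw xs) = linv (hd xs)"
  by (simp add: revw_def last_rev hd_map)

lemma reduced_Nil[simp]: "reduced []" and reduced_single[simp]: "reduced [x]"
  by (simp_all add: reduced_def)

text \<open>Reducedness is a local condition on consecutive letters, hence it is compatible with
  concatenation, subwords and inversion.\<close>

lemma reduced_Cons: "reduced (x # ls) \<longleftrightarrow> (ls \<noteq> [] \<longrightarrow> compat x (hd ls)) \<and> reduced ls"
proof
  assume r: "reduced (x # ls)"
  show "(ls \<noteq> [] \<longrightarrow> compat x (hd ls)) \<and> reduced ls"
  proof
    show "ls \<noteq> [] \<longrightarrow> compat x (hd ls)"
      using r[unfolded reduced_def, rule_format, of 0] by (cases ls) (auto simp: compat_def)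
    show "reduced ls" unfolding reduced_def
    proof (intro allI impI)
      fix i assume "Suc i < length ls"
      then show "\<not> (fst (ls ! i) = fst (ls ! Suc i) \<and> snd (ls ! i) \<noteq> snd (ls ! Suc i))"
        using r[unfolded reduced_def, rule_format, of "Suc i"] by simp
    qed
  qed
next
  assume h: "(ls \<noteq> [] \<longrightarrow> compat x (hd ls)) \<and> reduced ls"
  show "reduced (x # ls)" unfolding reduced_def
  proof (intro allI impI)
    fix i assume i: "Suc i < length (x # ls)"
    show "\<not> (fst ((x # ls) ! i) = fst ((x # ls) ! Suc i) \<and> snd ((x # ls) ! i) \<noteq> snd ((x # ls) ! Suc i))"
    proof (cases i)
      case 0
      then show ?thesis using h i by (cases ls) (auto simp: compat_def)
    next
      case (Suc j)
      then show ?thesis using h i unfolding reduced_def by auto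
    qed
  qed
qed

lemma reduced_append:
  "reduced (xs @ ys) \<longleftrightarrow> reduced xs \<and> reduced ys \<and> (xs \<noteq> [] \<longrightarrow> ys \<noteq> [] \<longrightarrow> compat (last xs) (hd ys))"
  by (induction xs) (auto simp: reduced_Cons)

lemma reduced_appI:
  "reduced xs \<Longrightarrow> reduced ys \<Longrightarrow> (xs \<noteq> [] \<Longrightarrow> ys \<noteq> [] \<Longrightarrow> compat (last xs) (hd ys)) \<Longrightarrow> reduced (xs @ ys)"
  by (simp add: reduced_append)

lemma reduced_sublist: "sublist xs ys \<Longrightarrow> reduced ys \<Longrightarrow> reduced xs"
  by (auto simp: sublist_def reduced_append)

lemma reduced_revw[simp]: "reduced (revw xs) \<longleftrightarrow> reduced xs"
proof (induction xs)
  case (Cons x xs)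
  have "reduced (revw (x # xs)) = (reduced (revw xs) \<and> (xs \<noteq> [] \<longrightarrow> compat (linv (hd xs)) (linv x)))"
    by (simp add: reduced_append last_revw reduced_Cons)
  also have "\<dots> = reduced (x # xs)"
    by (auto simp: Cons.IH reduced_Cons compat_linv)
  finally show ?case .
qed simp

lemma dir_append[simp]: "dir (xs @ ys) = dir xs @ dir ys" and dir_Nil[simp]: "dir [] = []"
  by (simp_all add: dir_def)

lemma dir_eq_Nil[simp]: "dir p = [] \<longleftrightarrow> p = []"
  by (simp add: dir_def)

lemma map_fst_dir[simp]: "map fst (dir p) = p"
  by (simp add: dir_def comp_def)

lemma set_dir_snd: "l \<in> set (dir p) \<Longrightarrow> snd l"
  by (auto simp: dir_def)

lemma hd_dir: "p \<noteq> [] \<Longrightarrow> hd (dir p) = (hd p, True)"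
  by (cases p) (auto simp: dir_def)

lemma last_dir: "p \<noteq> [] \<Longrightarrow> last (dir p) = (last p, True)"
  by (simp add: dir_def last_map)

lemma all_snd_dir: "(\<forall>l\<in>set xs. snd l) \<Longrightarrow> xs = dir (map fst xs)"
  by (induction xs) (auto simp: dir_def)

lemma reduced_dir[simp]: "reduced (dir p)"
proof (induction p)
  case (Cons x p)
  then show ?case by (cases p) (auto simp: dir_def reduced_Cons compat_def)
qed (simp add: dir_def)

text \<open>Propositional core of the separation argument: if e h is reduced while neither of the
  junction pairs (li, h), (e, lo) nor (li, e^-1), (h^-1, lo) is reduced on both sides, then
  lo is the inverse of li and equals h or e^-1.\<close>

lemma forced_letter:
  assumes "compat e h" "\<not> (compat li h \<and> compat e lo)" "\<not> (compat li (linv e) \<and> compat (linv h) lo)"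
  shows "lo = linv li \<and> (lo = h \<or> lo = linv e)"
  using assms unfolding compat_iff by (metis linv_linv)

lemma lcp_exists:
  "\<exists>F xs' ys'. xs = F @ xs' \<and> ys = F @ ys' \<and> (xs' = [] \<or> ys' = [] \<or> hd xs' \<noteq> hd ys')"
proof (induction xs arbitrary: ys)
  case Nil then show ?case by (intro exI[of _ "[]"] exI[of _ "[]"] exI[of _ ys]) simp
next
  case (Cons x xs)
  show ?case
  proof (cases ys)
    case Nil then show ?thesis by (intro exI[of _ "[]"] exI[of _ "x # xs"] exI[of _ "[]"]) simp
  next
    case (Cons y ys')
    show ?thesis
    proof (cases "x = y")
      case True
      from Cons.IH[of ys'] obtain F xs'' ys'' where
        "xs = F @ xs''" "ys' = F @ ys''" "xs'' = [] \<or> ys'' = [] \<or> hd xs'' \<noteq> hd ys''" by blast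
      then show ?thesis using Cons True by (intro exI[of _ "x # F"] exI[of _ xs''] exI[of _ ys'']) simp
    next
      case False
      then show ?thesis using Cons by (intro exI[of _ "[]"] exI[of _ "x # xs"] exI[of _ ys]) simp
    qed
  qed
qed

section \<open>Zero relations\<close>

lemma in_I_mono: "in_I Q xs \<Longrightarrow> sublist xs ys \<Longrightarrow> in_I Q ys"
  unfolding in_I_def by (meson sublist_order.order.trans)

lemma in_I_Nil: "(\<forall>r\<in>qrel Q. length r \<ge> 2) \<Longrightarrow> \<not> in_I Q []"
  by (auto simp: in_I_def)

lemma nzr_sublist: "sublist xs ys \<Longrightarrow> no_zero_rel Q ys \<Longrightarrow> no_zero_rel Q xs"
  unfolding no_zero_rel_def by (meson sublist_order.order.trans)

text \<open>A subword of the inverse walk is the inverse of a subword, so inversion preserves the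
  absence of zero relations.\<close>

lemma nzr_revw[simp]: "no_zero_rel Q (revw xs) \<longleftrightarrow> no_zero_rel Q xs"
proof -
  have *: "no_zero_rel Q (revw xs)" if "no_zero_rel Q xs" for xs
    unfolding no_zero_rel_def
  proof (intro allI impI)
    fix u assume "sublist u (revw xs)"
    then have "sublist (rev u) (map linv xs)" by (simp add: revw_def sublist_rev_right)
    then have "sublist (map linv (rev u)) (map linv (map linv xs))" by (rule map_mono_sublist)
    then have s: "sublist (revw u) xs" by (simp add: revw_def rev_map comp_def)
    have "\<not> ((\<forall>l\<in>set (revw u). snd l) \<and> in_I Q (map fst (revw u)))"
         "\<not> ((\<forall>l\<in>set (revw u). \<not> snd l) \<and> in_I Q (rev (map fst (revw u))))"
      using that s unfolding no_zero_rel_def by blast+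
    then show "\<not> ((\<forall>l\<in>set u. snd l) \<and> in_I Q (map fst u)) \<and>
          \<not> ((\<forall>l\<in>set u. \<not> snd l) \<and> in_I Q (rev (map fst u)))"
      by (auto simp: revw_def rev_map comp_def)
  qed
  show ?thesis using *[of xs] *[of "revw xs"] by auto
qed

lemma nzr_dir_iff:
  assumes "\<forall>r\<in>qrel Q. length r \<ge> 2"
  shows "no_zero_rel Q (dir p) \<longleftrightarrow> \<not> in_I Q p"
proof
  assume "no_zero_rel Q (dir p)"
  then have "\<not> ((\<forall>l\<in>set (dir p). snd l) \<and> in_I Q (map fst (dir p)))"
    unfolding no_zero_rel_def by blast
  then show "\<not> in_I Q p" using set_dir_snd by auto
next
  assume n: "\<not> in_I Q p"
  show "no_zero_rel Q (dir p)" unfolding no_zero_rel_def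
  proof (intro allI impI conjI)
    fix u assume s: "sublist u (dir p)"
    then have "sublist (map fst u) p"
      using map_mono_sublist[OF s, of fst] by simp
    then show "\<not> ((\<forall>l\<in>set u. snd l) \<and> in_I Q (map fst u))"
      using n unfolding in_I_def by (meson sublist_order.order.trans)
    show "\<not> ((\<forall>l\<in>set u. \<not> snd l) \<and> in_I Q (rev (map fst u)))"
    proof
      assume a: "(\<forall>l\<in>set u. \<not> snd l) \<and> in_I Q (rev (map fst u))"
      have "set u \<subseteq> set (dir p)" using s by (rule set_mono_sublist)
      then have "\<forall>l\<in>set u. snd l" using set_dir_snd by blast
      with a have "u = []" by (cases u) auto
      with a in_I_Nil[OF assms] show False by simp
    qed
  qed
qed

lemma suffix_short:
  assumes "suffix u (xs @ ys)" "length u \<le> length ys" shows "suffix u ys"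
proof -
  from assms(1) have "suffix u ys \<or> (\<exists>xs'. u = xs' @ ys \<and> suffix xs' xs)"
    by (simp add: suffix_append)
  then show ?thesis
  proof
    assume "\<exists>xs'. u = xs' @ ys \<and> suffix xs' xs"
    then obtain xs' where "u = xs' @ ys" by blast
    with assms(2) have "u = ys" by simp
    then show ?thesis by simp
  qed
qed

text \<open>Appending a letter creates no zero relation if the new suffixes are either covered by a
  word known to be free of relations or contain letters of both directions.\<close>

lemma nzr_snoc:
  assumes "no_zero_rel Q xs" "no_zero_rel Q ys" "xs @ [l] = zs @ c # ys" "snd c \<noteq> snd l"
  shows "no_zero_rel Q (xs @ [l])"
  unfolding no_zero_rel_def
proof (intro allI impI)
  fix u assume "sublist u (xs @ [l])"
  then have "suffix u (xs @ [l]) \<or> sublist u xs" by (simp add: sublist_snoc)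
  then show "\<not> ((\<forall>l\<in>set u. snd l) \<and> in_I Q (map fst u)) \<and>
          \<not> ((\<forall>l\<in>set u. \<not> snd l) \<and> in_I Q (rev (map fst u)))"
  proof
    assume "sublist u xs" then show ?thesis using assms(1) unfolding no_zero_rel_def by blast
  next
    assume su: "suffix u (xs @ [l])"
    have su2: "suffix u ((zs @ [c]) @ ys)" using su assms(3) by simp
    show ?thesis
    proof (cases "length u \<le> length ys")
      case True
      then have "suffix u ys" using su2 suffix_short by blast
      then show ?thesis using assms(2) unfolding no_zero_rel_def by blast
    next
      case False
      have "suffix u ys \<or> (\<exists>xs'. u = xs' @ ys \<and> suffix xs' (zs @ [c]))"
        using su2 suffix_append[of u "zs @ [c]" ys] by blast
      with False obtain xs' where xs': "u = xs' @ ys" "suffix xs' (zs @ [c])"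
        using suffix_length_le by fastforce
      with False have "xs' \<noteq> []" by auto
      with xs' have "last xs' = c" by (auto simp: suffix_def) (metis last_appendR last_snoc)
      with \<open>xs' \<noteq> []\<close> xs' have "c \<in> set u" by auto
      moreover have "l \<in> set u"
      proof -
        from False have "u \<noteq> []" by auto
        with su obtain v where "xs @ [l] = v @ u" by (auto simp: suffix_def)
        then have "last u = l" using \<open>u \<noteq> []\<close> by (metis last_appendR last_snoc)
        with \<open>u \<noteq> []\<close> show ?thesis by auto
      qed
      ultimately show ?thesis using assms(4) by auto
    qed
  qed
qed

text \<open>If a relation-free word w followed by a relation-free path P contains a zero relation,
  the relation straddles the junction: w ends with a path p such that p P lies in I.\<close>

lemma extract_rel:
  assumes rel2: "\<forall>r\<in>qrel Q. length r \<ge> 2" and nzw: "no_zero_rel Q w" and nP: "\<not> in_I Q P"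
    and bad: "\<not> no_zero_rel Q (w @ dir P)"
  shows "\<exists>w0 p. w = w0 @ dir p \<and> p \<noteq> [] \<and> in_I Q (p @ P)"
proof -
  have nzP: "no_zero_rel Q (dir P)" using nzr_dir_iff[OF rel2] nP by blast
  from bad obtain u where su: "sublist u (w @ dir P)" and
    C: "((\<forall>l\<in>set u. snd l) \<and> in_I Q (map fst u)) \<or> ((\<forall>l\<in>set u. \<not> snd l) \<and> in_I Q (rev (map fst u)))"
    unfolding no_zero_rel_def by blast
  have nsw: "\<not> sublist u w" using nzw C unfolding no_zero_rel_def by blast
  have nsP: "\<not> sublist u (dir P)" using nzP C unfolding no_zero_rel_def by blast
  from su nsw nsP obtain u1 u2 where u12: "u = u1 @ u2" "suffix u1 w" "prefix u2 (dir P)"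
    by (auto simp: sublist_append)
  have u1ne: "u1 \<noteq> []" using u12 nsP by auto
  have u2ne: "u2 \<noteq> []" using u12 nsw by auto
  have Pne: "P \<noteq> []" using u12(3) u2ne by (cases P) (auto simp: dir_def)
  have "hd u2 = hd (dir P)" using u12(3) u2ne by (auto simp: prefix_def)
  then have "snd (hd u2) = True" using Pne by (simp add: hd_dir)
  moreover have "hd u2 \<in> set u" using u12(1) u2ne by simp
  ultimately have C1: "(\<forall>l\<in>set u. snd l) \<and> in_I Q (map fst u)" using C by blast
  define p where "p = map fst u1"
  have u1d: "u1 = dir p" unfolding p_def by (rule all_snd_dir) (use C1 u12(1) in simp)
  obtain w0 where w0: "w = w0 @ u1" using u12(2) by (auto simp: suffix_def)
  have pref: "prefix (map fst u2) P"
  proof -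
    have "prefix (map fst u2) (map fst (dir P))" using u12(3) by (rule map_mono_prefix)
    then show ?thesis by simp
  qed
  have "sublist (p @ map fst u2) (p @ P)" using pref by (auto simp: prefix_def)
  moreover have "in_I Q (p @ map fst u2)" using C1 u12(1) by (simp add: p_def)
  ultimately have "in_I Q (p @ P)" by (rule in_I_mono[rotated])
  moreover have "p \<noteq> []" using u1ne by (simp add: p_def)
  ultimately show ?thesis using w0 u1d by blast
qed

section \<open>Walks and strings\<close>

text \<open>Endpoints of arrows are vertices; this part of the string algebra axioms is all that the
  walk calculus needs.\<close>

definition wf_quiver :: "('v,'a) bquiver \<Rightarrow> bool" where
  "wf_quiver Q \<longleftrightarrow> (\<forall>\<alpha>\<in>qa Q. qs Q \<alpha> \<in> qv Q \<and> qt Q \<alpha> \<in> qv Q)"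

lemma lsrc_linv[simp]: "lsrc Q (linv l) = ltgt Q l" and ltgt_linv[simp]: "ltgt Q (linv l) = lsrc Q l"
  by (cases l; simp add: linv_def)+

lemma lsrc_ltgt_qv: "wf_quiver Q \<Longrightarrow> fst l \<in> qa Q \<Longrightarrow> lsrc Q l \<in> qv Q \<and> ltgt Q l \<in> qv Q"
  by (cases l) (auto simp: wf_quiver_def)

lemma walk_from_qv: "wf_quiver Q \<Longrightarrow> walk_from Q x ls \<Longrightarrow> x \<in> qv Q"
  by (cases ls) (auto dest: lsrc_ltgt_qv)

lemma walk_letters: "walk_from Q x ls \<Longrightarrow> l \<in> set ls \<Longrightarrow> fst l \<in> qa Q"
  by (induction ls arbitrary: x) auto

lemma wend_from_append[simp]: "wend_from Q x (xs @ ys) = wend_from Q (wend_from Q x xs) ys"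
  by (induction xs arbitrary: x) auto

lemma walk_from_append:
  "wf_quiver Q \<Longrightarrow> walk_from Q x (xs @ ys) \<longleftrightarrow> walk_from Q x xs \<and> walk_from Q (wend_from Q x xs) ys"
  by (induction xs arbitrary: x) (auto dest: walk_from_qv)

lemma walk_from_snoc:
  "wf_quiver Q \<Longrightarrow> walk_from Q x (xs @ [l]) \<longleftrightarrow> walk_from Q x xs \<and> fst l \<in> qa Q \<and> lsrc Q l = wend_from Q x xs"
  by (auto simp: walk_from_append dest: lsrc_ltgt_qv)

lemma walk_revw:
  assumes "wf_quiver Q" "walk_from Q x ls"
  shows "walk_from Q (wend_from Q x ls) (revw ls) \<and> wend_from Q (wend_from Q x ls) (revw ls) = x"
  using assms(2)
proof (induction ls arbitrary: x)
  case Nil then show ?case by simp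
next
  case (Cons l ls)
  then have l: "fst l \<in> qa Q" "lsrc Q l = x" and w: "walk_from Q (ltgt Q l) ls" by auto
  from Cons.IH[OF w] show ?case using l assms(1)
    by (auto simp: walk_from_append dest: lsrc_ltgt_qv)
qed

lemma wend_revw: "wf_quiver Q \<Longrightarrow> walk_from Q x ls \<Longrightarrow> wend_from Q (wend_from Q x ls) (revw ls) = x"
  by (auto dest: walk_revw)

lemma walk_dir: "path_from Q x p \<longleftrightarrow> walk_from Q x (dir p)"
  by (induction p arbitrary: x) (auto simp: dir_def)

lemma wend_dir: "path_end Q x p = wend_from Q x (dir p)"
  by (induction p arbitrary: x) (auto simp: dir_def)

lemma path_append:
  "wf_quiver Q \<Longrightarrow> path_from Q x (p @ q) \<longleftrightarrow> path_from Q x p \<and> path_from Q (path_end Q x p) q"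
  by (simp add: walk_dir wend_dir walk_from_append)

lemma path_end_append: "path_end Q x (p @ q) = path_end Q (path_end Q x p) q"
  by (simp add: wend_dir)

lemma walk_split_vertex:
  assumes "v \<in> insert x (ltgt Q ` set ls)"
  shows "\<exists>l1 l2. ls = l1 @ l2 \<and> wend_from Q x l1 = v"
  using assms
proof (induction ls arbitrary: x)
  case Nil then show ?case by auto
next
  case (Cons l ls x)
  show ?case
  proof (cases "v = x")
    case True then show ?thesis by (intro exI[of _ "[]"] exI[of _ "l # ls"]) simp
  next
    case False
    then have "v \<in> insert (ltgt Q l) (ltgt Q ` set ls)" using Cons.prems by simp
    from Cons.IH[OF this] obtain l1 l2 where "ls = l1 @ l2" "wend_from Q (ltgt Q l) l1 = v" by blast
    then show ?thesis by (intro exI[of _ "l # l1"] exI[of _ l2]) auto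
  qed
qed

lemma wend_in_wverts: "wend_from Q x L \<in> wverts Q (x, L)"
  by (cases L rule: rev_cases) (auto simp: wverts_def)

definition string_from :: "('v,'a) bquiver \<Rightarrow> 'v \<Rightarrow> 'a letter list \<Rightarrow> bool" where
  "string_from Q x ls \<longleftrightarrow> walk_from Q x ls \<and> reduced ls \<and> no_zero_rel Q ls"

lemma is_string_iff: "is_string Q w \<longleftrightarrow> string_from Q (fst w) (snd w)"
  by (simp add: is_string_def string_from_def is_walk_def)

lemma string_prefix: "wf_quiver Q \<Longrightarrow> string_from Q x (xs @ ys) \<Longrightarrow> string_from Q x xs"
  by (auto simp: string_from_def walk_from_append reduced_append intro: nzr_sublist)

lemma string_suffix:
  "wf_quiver Q \<Longrightarrow> string_from Q x (xs @ ys) \<Longrightarrow> string_from Q (wend_from Q x xs) ys"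
  by (auto simp: string_from_def walk_from_append reduced_append intro: nzr_sublist)

lemma string_revw:
  "wf_quiver Q \<Longrightarrow> string_from Q x ls \<Longrightarrow> string_from Q (wend_from Q x ls) (revw ls)"
  by (auto simp: string_from_def dest: walk_revw)

lemma extend_string_by_path:
  assumes "wf_quiver Q" "\<forall>r\<in>qrel Q. length r \<ge> 2"
    and w: "string_from Q a w" and P: "path_from Q (wend_from Q a w) P" "\<not> in_I Q P"
    and no_turn: "w \<noteq> [] \<Longrightarrow> last w \<noteq> (hd P, False)"
  shows "string_from Q a (w @ dir P) \<or> (\<exists>w0 p. w = w0 @ dir p \<and> p \<noteq> [] \<and> in_I Q (p @ P))"
proof -
  have walk: "walk_from Q a (w @ dir P)"
    using w P(1) assms(1) by (simp add: string_from_def walk_from_append walk_dir)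
  have red: "reduced (w @ dir P)"
  proof (rule reduced_appI)
    show "reduced w" using w by (simp add: string_from_def)
    show "compat (last w) (hd (dir P))" if "w \<noteq> []" "dir P \<noteq> []"
      using that no_turn by (cases "last w") (auto simp: hd_dir compat_def)
  qed simp
  show ?thesis
  proof (cases "no_zero_rel Q (w @ dir P)")
    case True
    then show ?thesis using walk red by (simp add: string_from_def)
  next
    case False
    then show ?thesis using extract_rel[OF assms(2) _ P(2)] w by (auto simp: string_from_def)
  qed
qed

section \<open>The subcategory D(e_a) described by strings from a\<close>

text \<open>The strings of W(e_a) are the strings passing through a; cutting such a string at a and
  inverting its first part shows that D(e_a) consists of the endpoints and arrows of strings
  starting at a.\<close>

lemma string_in_D:
  assumes "wf_quiver Q" "a \<in> qv Q" "string_from Q a L"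
  shows "wend_from Q a L \<in> D_obj Q (a, []) \<and> fst ` set L \<subseteq> D_arr Q (a, [])"
proof -
  have "(a, L) \<in> Wstr Q (a, [])"
    unfolding Wstr_def
  proof (intro CollectI conjI exI)
    show "is_string Q (a, L)" using assms(3) by (simp add: is_string_iff)
    show "is_walk Q (a, [])" using assms(2) by (simp add: is_walk_def)
    show "is_walk Q (a, L)" using assms(3) by (simp add: is_walk_def string_from_def)
    show "wend Q (a, []) = fst (a, [])" by (simp add: wend_def)
    show "wend Q (a, []) = fst (a, L)" by (simp add: wend_def)
    show "(a, L) = (fst (a, []), snd (a, []) @ snd (a, []) @ snd (a, L))" by simp
  qed
  then have "wverts Q (a, L) \<subseteq> D_obj Q (a, [])" "warrs (a, L) \<subseteq> D_arr Q (a, [])"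
    unfolding D_obj_def D_arr_def by blast+
  then show ?thesis using wend_in_wverts[of Q a L]
    by (auto simp: warrs_def)
qed

lemma D_obj_reached_by_string:
  assumes "wf_quiver Q" "v \<in> D_obj Q (a, [])"
  shows "\<exists>L. string_from Q a L \<and> wend_from Q a L = v"
proof -
  from assms(2) obtain s where s: "s \<in> Wstr Q (a, [])" "v \<in> wverts Q s" by (auto simp: D_obj_def)
  then obtain u w where uw: "is_string Q s" "is_walk Q u" "is_walk Q w" "wend Q u = a"
    "wend Q (a, []) = fst w" "s = (fst u, snd u @ snd w)"
    by (auto simp: Wstr_def)
  define x where "x = fst u"
  define U where "U = snd u"
  define V where "V = snd w"
  have S: "string_from Q x (U @ V)" using uw by (simp add: is_string_iff x_def U_def V_def)
  have Ua: "wend_from Q x U = a" using uw(4) by (simp add: wend_def x_def U_def)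
  have "v \<in> insert x (ltgt Q ` set (U @ V))" using s(2) uw(6) by (simp add: wverts_def x_def U_def V_def)
  then obtain l1 l2 where l12: "U @ V = l1 @ l2" "wend_from Q x l1 = v"
    using walk_split_vertex[of v x Q "U @ V"] by blast
  from l12(1) obtain m where "(l1 = U @ m \<and> V = m @ l2) \<or> (U = l1 @ m \<and> m @ V = l2)"
    by (auto simp: append_eq_append_conv2)
  then show ?thesis
  proof
    assume h: "l1 = U @ m \<and> V = m @ l2"
    have "string_from Q a V" using string_suffix[OF assms(1) S] Ua by simp
    then have "string_from Q a m" using h string_prefix[OF assms(1)] by blast
    moreover have "wend_from Q a m = v" using h l12(2) Ua by simp
    ultimately show ?thesis by blast
  next
    assume h: "U = l1 @ m \<and> m @ V = l2"
    have "string_from Q x U" using string_prefix[OF assms(1) S] .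
    then have sm: "string_from Q v m" using h string_suffix[OF assms(1)] l12(2) by blast
    have em: "wend_from Q v m = a" using h l12(2) Ua by simp
    have "string_from Q a (revw m)" using string_revw[OF assms(1) sm] em by simp
    moreover have "wend_from Q a (revw m) = v"
      using wend_revw[OF assms(1)] sm em by (metis string_from_def)
    ultimately show ?thesis by blast
  qed
qed

lemma last_letter_in_D:
  assumes "wf_quiver Q" "a \<in> qv Q" "string_from Q a s" "s \<noteq> []"
  shows "fst (last s) \<in> D_arr Q (a, [])" "lsrc Q (last s) \<in> D_obj Q (a, [])"
    "ltgt Q (last s) \<in> D_obj Q (a, [])"
proof -
  have s: "s = butlast s @ [last s]" using assms(4) by simp
  have "string_from Q a (butlast s)" using string_prefix[OF assms(1)] assms(3) s by metis
  moreover have "wend_from Q a (butlast s) = lsrc Q (last s)"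
    using assms(3) s walk_from_snoc[OF assms(1)] by (metis string_from_def)
  ultimately show "lsrc Q (last s) \<in> D_obj Q (a, [])" using string_in_D[OF assms(1,2)] by metis
  show "fst (last s) \<in> D_arr Q (a, [])"
    using string_in_D[OF assms(1,2,3)] last_in_set[OF assms(4)] by blast
  show "ltgt Q (last s) \<in> D_obj Q (a, [])"
    using string_in_D[OF assms(1,2,3)] s by (metis wend_from_append wend_from.simps)
qed

section \<open>Bands: powers, rotations and the inverse band\<close>

abbreviation lpow :: "'a letter list \<Rightarrow> nat \<Rightarrow> 'a letter list" where
  "lpow T n \<equiv> concat (replicate n T)"

lemma lpow_snoc: "lpow X n @ X = X @ lpow X n"
  by (induction n) auto

lemma lpow_Suc2: "lpow X (Suc n) = lpow X n @ X"
  by (simp add: lpow_snoc)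

lemma revw_lpow: "revw (lpow T n) = lpow (revw T) n"
  by (induction n) (auto simp: lpow_snoc)

lemma rot_lpow: "A @ lpow (B @ A) n = lpow (A @ B) n @ A"
  by (induction n) auto

lemma wend_lpow:
  assumes "wend_from Q x T = x" shows "wend_from Q x (lpow T n) = x"
  by (induction n) (auto simp: assms)

lemma walk_lpow:
  assumes "wf_quiver Q" "walk_from Q x T" "wend_from Q x T = x"
  shows "walk_from Q x (lpow T n)"
proof (induction n)
  case 0 then show ?case using assms walk_from_qv by auto
next
  case (Suc n) then show ?case using assms by (auto simp: walk_from_append)
qed

text \<open>A fixed band (\<theta>, T).  An occurrence of a vertex v on the band is a splitting T = A B
  with A ending at v; the rotation B A is then the band read from v.\<close>

locale band_at =
  fixes Q :: "('v,'a) bquiver" and \<theta> :: 'v and T :: "'a letter list"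
  assumes wf: "wf_quiver Q" and band: "is_band Q (\<theta>, T)"
begin

lemma T_ne: "T \<noteq> []" using band by (simp add: is_band_def)

lemma walkT: "walk_from Q \<theta> T" using band by (simp add: is_band_def is_string_def is_walk_def)

lemma wendT: "wend_from Q \<theta> T = \<theta>" using band by (simp add: is_band_def wend_def)

lemma string_lpow: "n \<ge> 1 \<Longrightarrow> string_from Q \<theta> (lpow T n)"
  using band by (auto simp: is_band_def wpow_def is_string_iff)

lemma wend_lpowT: "wend_from Q \<theta> (lpow T n) = \<theta>"
  by (rule wend_lpow[OF wendT])

lemma lpow_sublist_ok:
  assumes "sublist xs (lpow T n)"
  shows "reduced xs \<and> no_zero_rel Q xs"
proof -
  have "sublist (lpow T n) (lpow T (Suc n))" by (simp add: lpow_Suc2)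
  then have "sublist xs (lpow T (Suc n))" using assms by (meson sublist_order.order.trans)
  moreover have "string_from Q \<theta> (lpow T (Suc n))" by (rule string_lpow) simp
  ultimately show ?thesis by (auto simp: string_from_def intro: reduced_sublist nzr_sublist)
qed

lemma theta_qv: "\<theta> \<in> qv Q"
  by (rule walk_from_qv[OF wf walkT])

text \<open>The inverse of a band is a band; this doubles the available case analysis, since the
  band may be traversed in either direction.\<close>

lemma inv_band: "is_band Q (\<theta>, revw T)"
proof -
  have e: "wend_from Q \<theta> (revw T) = \<theta>" using walk_revw[OF wf walkT] wendT by simp
  have s: "is_string Q (wpow (\<theta>, revw T) n)" if "n \<ge> 1" for n
  proof -
    have "string_from Q \<theta> (lpow T n)" using string_lpow that by blast
    then have "string_from Q \<theta> (revw (lpow T n))"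
      using string_revw[OF wf] wend_lpowT by fastforce
    then show ?thesis by (simp add: wpow_def is_string_iff revw_lpow)
  qed
  have np: "\<not> (\<exists>u k. k \<ge> 2 \<and> revw T = lpow u k)"
  proof
    assume "\<exists>u k. k \<ge> 2 \<and> revw T = lpow u k"
    then obtain u k where "k \<ge> 2" "revw T = lpow u k" by blast
    then have "revw (revw T) = revw (lpow u k)" by simp
    then have "T = lpow (revw u) k" by (simp only: revw_revw revw_lpow)
    with \<open>k \<ge> 2\<close> band show False by (auto simp: is_band_def)
  qed
  have s1: "is_string Q (\<theta>, revw T)" using s[of 1] by (simp add: wpow_def)
  show ?thesis unfolding is_band_def
    using s1 e np T_ne s by (simp add: wend_def)
qed

lemma occurrence:
  assumes "v \<in> wverts Q (\<theta>, T)"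
  shows "\<exists>A B. T = A @ B \<and> wend_from Q \<theta> A = v"
  using assms walk_split_vertex[of v \<theta> Q T] by (simp add: wverts_def)

lemma vert_in_wverts:
  assumes "T = A @ B" shows "wend_from Q \<theta> A \<in> wverts Q (\<theta>, T)"
proof (cases A rule: rev_cases)
  case Nil then show ?thesis by (simp add: wverts_def)
next
  case (snoc A' l) then show ?thesis using assms by (simp add: wverts_def)
qed

lemma a_qv: "a \<in> wverts Q (\<theta>, T) \<Longrightarrow> a \<in> qv Q"
  using theta_qv walkT wf by (auto simp: wverts_def dest: walk_letters lsrc_ltgt_qv)

lemma warrs_ends:
  assumes "fst l \<in> warrs (\<theta>, T)"
  shows "lsrc Q l \<in> wverts Q (\<theta>, T) \<and> ltgt Q l \<in> wverts Q (\<theta>, T)"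
proof -
  from assms obtain l' where l': "l' \<in> set T" "fst l' = fst l" by (auto simp: warrs_def)
  then obtain A B where AB: "T = A @ l' # B" by (meson split_list)
  have "walk_from Q \<theta> (A @ l' # B)" using walkT AB by simp
  then have src: "lsrc Q l' = wend_from Q \<theta> A" using wf by (simp add: walk_from_append)
  have "lsrc Q l' \<in> wverts Q (\<theta>, T)" using src vert_in_wverts[of A "l' # B"] AB by simp
  moreover have "ltgt Q l' \<in> wverts Q (\<theta>, T)" using vert_in_wverts[of "A @ [l']" B] AB by simp
  ultimately show ?thesis using l'(2)
    by (cases l; cases l') (auto split: if_splits)
qed

lemma path_stays:
  assumes "v \<in> wverts Q (\<theta>, T)" "\<forall>l\<in>set d. fst l \<in> warrs (\<theta>, T)" "walk_from Q v d"
  shows "wend_from Q v d \<in> wverts Q (\<theta>, T)"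
  using assms
proof (induction d arbitrary: v)
  case (Cons l d)
  then have "ltgt Q l \<in> wverts Q (\<theta>, T)" using warrs_ends by auto
  with Cons show ?case by auto
qed simp

lemma walk_occurrence:
  assumes "T = A @ B" "wend_from Q \<theta> A = v"
  shows "walk_from Q v B" "wend_from Q v B = \<theta>" "walk_from Q \<theta> A"
  using walkT wendT assms wf by (auto simp: walk_from_append)

lemma walk_rotation:
  assumes "T = A @ B" "wend_from Q \<theta> A = t"
  shows "walk_from Q t (B @ A)" "wend_from Q t (B @ A) = t"
  using walk_occurrence[OF assms] assms wf by (simp_all add: walk_from_append)

lemma rot_compat:
  assumes "T = A @ B"
  shows "compat (last (B @ A)) (hd (B @ A))"
proof -
  have "lpow T 3 = A @ ((B @ A) @ (B @ A)) @ B" using assms by (simp add: numeral_3_eq_3)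
  then have "reduced ((B @ A) @ (B @ A))" using lpow_sublist_ok by (metis sublist_appendI)
  moreover have "B @ A \<noteq> []" using T_ne assms by auto
  ultimately show ?thesis by (simp add: reduced_append del: append_assoc)
qed

lemma around_band:
  assumes "T = A @ B"
  shows "hd (B @ T @ A) = hd (B @ A)" "last (B @ T @ A) = last (B @ A)"
    "reduced (B @ T @ A)"
proof -
  show "hd (B @ T @ A) = hd (B @ A)" using assms T_ne by (cases B) auto
  show "last (B @ T @ A) = last (B @ A)" using assms T_ne by (cases A rule: rev_cases) auto
  have "lpow T 3 = A @ (B @ T @ A) @ B" using assms by (simp add: numeral_3_eq_3)
  then show "reduced (B @ T @ A)" using lpow_sublist_ok by (metis sublist_appendI)
qed

lemma rotation_letters_on_band:
  assumes "T = A @ B"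
  shows "fst (hd (B @ A)) \<in> warrs (\<theta>, T)" "fst (last (B @ A)) \<in> warrs (\<theta>, T)"
proof -
  have ne: "B @ A \<noteq> []" and st: "set (B @ A) = set T" using T_ne assms by auto
  show "fst (hd (B @ A)) \<in> warrs (\<theta>, T)" using hd_in_set[OF ne] st by (auto simp: warrs_def)
  show "fst (last (B @ A)) \<in> warrs (\<theta>, T)" using last_in_set[OF ne] st by (auto simp: warrs_def)
qed

lemma rotK_sublist:
  assumes "T = A @ B"
  shows "sublist (lpow (B @ A) K) (lpow T (Suc K))"
proof -
  have "lpow T (Suc K) = (lpow (A @ B) K @ A) @ B" using assms by (simp only: lpow_Suc2) simp
  also have "lpow (A @ B) K @ A = A @ lpow (B @ A) K" by (rule rot_lpow[symmetric])
  finally have "lpow T (Suc K) = A @ lpow (B @ A) K @ B" by simp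
  then show ?thesis by (metis sublist_appendI)
qed

section \<open>Assembling a DOZE\<close>

lemma doze_assembly:
  assumes "in_I Q r" "path_from Q t r" "path_end Q t r = x'"
    "walk_from Q x' (Z1 @ T @ Z2)" "wend_from Q x' Z1 = \<theta>" "wend_from Q x' (Z1 @ T @ Z2) = t"
    "reduced (dir r @ Z1 @ T @ Z2 @ dir r)"
  shows "\<exists>w. is_DOZE Q w"
proof -
  have wr: "walk_from Q t (dir r)" "wend_from Q t (dir r) = x'"
    using assms(2,3) by (simp_all only: walk_dir wend_dir)
  have walk: "walk_from Q t (dir r @ Z1 @ T @ Z2 @ dir r)"
    using wr assms(4,6) wf by (simp add: walk_from_append)
  have b: "is_band Q (wend_from Q t (dir r @ Z1), T)" using wr assms(5) band by simp
  have "is_DOZE Q (t, dir r @ Z1 @ T @ Z2 @ dir r)"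
    unfolding is_DOZE_def fst_conv snd_conv
  proof (intro conjI)
    show "is_walk Q (t, dir r @ Z1 @ T @ Z2 @ dir r)" using walk by (simp add: is_walk_def)
    show "reduced (dir r @ Z1 @ T @ Z2 @ dir r)" using assms(7) .
    show "\<exists>r1 o1 o2 o3 r2. dir r @ Z1 @ T @ Z2 @ dir r = dir r1 @ o1 @ o2 @ o3 @ dir r2 \<and>
        in_I Q r1 \<and> in_I Q r2 \<and> is_band Q (wend_from Q t (dir r1 @ o1), o2)"
      using assms(1) b by (intro exI[of _ r] exI[of _ Z1] exI[of _ T] exI[of _ Z2] exI[of _ r]) simp
  qed
  then show ?thesis by blast
qed

text \<open>The DOZE used in the key lemma: a walk X from the end of the relation r to a band vertex
  v, once around the band from v, and a walk Y from v back to the start of r.  Only the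
  four junction conditions have to be checked.\<close>

lemma doze_at:
  assumes "in_I Q r" "r \<noteq> []" "path_from Q t r" "path_end Q t r = x'"
    "walk_from Q x' X" "wend_from Q x' X = v" "walk_from Q v Y" "wend_from Q v Y = t"
    "reduced X" "reduced Y" "T = A @ B" "wend_from Q \<theta> A = v"
    "compat (if X = [] then (last r, True) else last X) (hd (B @ A))"
    "compat (last (B @ A)) (if Y = [] then (hd r, True) else hd Y)"
    "X \<noteq> [] \<Longrightarrow> compat (last r, True) (hd X)"
    "Y \<noteq> [] \<Longrightarrow> compat (last Y) (hd r, True)"
  shows "\<exists>w. is_DOZE Q w"
proof -
  note wB = walk_occurrence[OF assms(11,12)]
  note rf = around_band[OF assms(11)]
  have w1: "walk_from Q x' ((X @ B) @ T @ (A @ Y))"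
    using assms(5,6,7,11,12) wB walkT wendT wf by (simp add: walk_from_append)
  have w2: "wend_from Q x' (X @ B) = \<theta>" using assms(6) wB by simp
  have w3: "wend_from Q x' ((X @ B) @ T @ (A @ Y)) = t" using assms(6,8,11,12) wB wendT by simp
  have hdr: "hd (dir r) = (hd r, True)" "last (dir r) = (last r, True)"
    using assms(2) by (simp_all add: hd_dir last_dir)
  define M where "M = B @ T @ A"
  have Mne: "M \<noteq> []" using T_ne by (simp add: M_def)
  have Mh: "hd M = hd (B @ A)" and Ml: "last M = last (B @ A)" and Mr: "reduced M"
    using rf by (simp_all add: M_def)
  have red1: "reduced (X @ M)"
    by (rule reduced_appI[OF assms(9) Mr]) (use assms(13) Mh in simp)
  have red2: "reduced ((X @ M) @ Y)"
    by (rule reduced_appI[OF red1 assms(10)]) (use assms(14) Mne Ml in simp)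
  have hXMY: "hd ((X @ M) @ Y) = (if X = [] then hd (B @ A) else hd X)"
    using Mne Mh by (cases X) auto
  have lXMY: "last ((X @ M) @ Y) = (if Y = [] then last (B @ A) else last Y)"
    using Mne Ml by (cases "Y = []") auto
  have red3: "reduced (dir r @ ((X @ M) @ Y))"
    by (rule reduced_appI[OF reduced_dir red2]) (use assms(13,15) hdr hXMY in \<open>cases "X = []"\<close>; simp)
  have red4: "reduced ((dir r @ ((X @ M) @ Y)) @ dir r)"
    by (rule reduced_appI[OF red3 reduced_dir]) (use assms(14,16) hdr lXMY Mne in \<open>cases "Y = []"\<close>; simp)
  then have "reduced (dir r @ (X @ B) @ T @ (A @ Y) @ dir r)" by (simp add: M_def)
  then show ?thesis
    by (rule doze_assembly[OF assms(1,3,4) w1 w2 w3])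
qed

end

section \<open>The key lemma: reaching the last arrow of a relation\<close>

text \<open>Some string from a ends with the inverse of the arrow \<beta>; its last letter then exhibits
  \<beta> and both endpoints of \<beta> in D(e_a).\<close>

definition ends_in_inverse :: "('v,'a) bquiver \<Rightarrow> 'v \<Rightarrow> 'a \<Rightarrow> bool" where
  "ends_in_inverse Q a \<beta> \<longleftrightarrow> (\<exists>s. string_from Q a s \<and> s \<noteq> [] \<and> last s = (\<beta>, False))"

context band_at
begin

text \<open>A walk u leaving the band vertex t along the band rotation agrees with a long power of
  the rotation on a nonempty common prefix F; the rotation then continues with a word S1
  reaching the base point, a full turn T, and A back to t.\<close>

lemma follow_band_rotation:
  assumes occ: "T = A @ B" "wend_from Q \<theta> A = t" and une: "u \<noteq> []" and hu: "hd u = hd (B @ A)"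
  obtains F rest S1 where "u = F @ rest" "F \<noteq> []" "rest \<noteq> [] \<Longrightarrow> hd rest \<noteq> hd (S1 @ T @ A)"
    "walk_from Q t (F @ S1 @ T @ A)" "wend_from Q t (F @ S1) = \<theta>"
    "\<And>xs. sublist xs (F @ S1 @ T @ A) \<Longrightarrow> reduced xs \<and> no_zero_rel Q xs"
proof -
  define R where "R = B @ A"
  define n where "n = length u"
  define RK where "RK = lpow R (Suc (Suc n))"
  define G where "G = B @ lpow T n"
  have Rne: "R \<noteq> []" using T_ne occ by (auto simp: R_def)
  have wR: "walk_from Q t R" "wend_from Q t R = t" using walk_rotation[OF occ] by (simp_all add: R_def)
  have wRK: "walk_from Q t RK" unfolding RK_def by (rule walk_lpow[OF wf wR])
  have RKdec: "RK = G @ T @ A"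
  proof -
    have "RK = B @ (A @ lpow (B @ A) (Suc n))" by (simp add: RK_def R_def)
    also have "A @ lpow (B @ A) (Suc n) = lpow (A @ B) (Suc n) @ A" by (rule rot_lpow)
    also have "lpow (A @ B) (Suc n) = lpow T n @ T" using occ by (simp only: lpow_Suc2)
    finally show ?thesis by (simp add: G_def)
  qed
  have wG: "wend_from Q t G = \<theta>" using walk_occurrence[OF occ] wend_lpowT by (simp add: G_def)
  have okRK: "reduced xs \<and> no_zero_rel Q xs" if "sublist xs RK" for xs
    using lpow_sublist_ok rotK_sublist[OF occ(1)] that unfolding RK_def R_def
    by (meson sublist_order.order.trans)
  obtain F rest S where FS: "u = F @ rest" "RK = F @ S" "rest = [] \<or> S = [] \<or> hd rest \<noteq> hd S"
    using lcp_exists[of u RK] by blast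
  have hdRK: "RK \<noteq> [] \<and> hd RK = hd R" using Rne by (simp add: RK_def)
  have Fne: "F \<noteq> []"
  proof
    assume "F = []"
    then have "rest = u" "S = RK" using FS by auto
    with FS(3) une hdRK hu show False by (simp add: R_def)
  qed
  have "length (lpow T n) = n * length T" by (induction n) auto
  with T_ne have "length (lpow T n) \<ge> n" by (cases T) auto
  then have lenFG: "length F \<le> length G" using FS(1) by (simp add: G_def n_def)
  obtain S1 where GS1: "G = F @ S1" and SS1: "S = S1 @ T @ A"
  proof -
    have "F @ S = G @ (T @ A)" using FS(2) RKdec by simp
    then have "take (length F) G = F \<and> S = drop (length F) G @ T @ A"
      using lenFG by (auto simp: append_eq_append_conv_if)
    then show ?thesis using that[of "drop (length F) G"] by (metis append_take_drop_id)
  qed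
  show ?thesis
  proof (rule that[of F rest S1])
    show "u = F @ rest" "F \<noteq> []" using FS(1) Fne .
    show "hd rest \<noteq> hd (S1 @ T @ A)" if "rest \<noteq> []" using FS(3) SS1 that T_ne by auto
    show "walk_from Q t (F @ S1 @ T @ A)" using wRK FS(2) SS1 by simp
    show "wend_from Q t (F @ S1) = \<theta>" using wG GS1 by simp
    show "reduced xs \<and> no_zero_rel Q xs" if "sublist xs (F @ S1 @ T @ A)" for xs
      using okRK FS(2) SS1 that by simp
  qed
qed

text \<open>Case of the key lemma in which the string w' towards the end x' of the relation p P
  starts at t along the band, in the direction of p.  Following the band from t either closes
  a DOZE  (p P) w'^-1 Theta (p P),  or it is forced to turn back into P, which produces a
  string from a ending with the inverse of the last arrow of P.\<close>

lemma return_along_band: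
  assumes noD: "\<not> (\<exists>w. is_DOZE Q w)"
    and Sw: "string_from Q a (d @ u)" and une: "u \<noteq> []"
    and occ: "T = A @ B" "wend_from Q \<theta> A = t" and td: "wend_from Q a d = t"
    and hu: "hd u = hd (B @ A)" "hd u = (hd p, True)"
    and lw: "last (d @ u) \<noteq> (last P, True)"
    and rI: "in_I Q (p @ P)" "p \<noteq> []" "P \<noteq> []" "path_from Q t (p @ P)"
      "path_end Q t (p @ P) = wend_from Q a (d @ u)"
  shows "ends_in_inverse Q a (last P)"
proof -
  obtain F rest S1 where FS: "u = F @ rest" "F \<noteq> []" and sep: "rest \<noteq> [] \<Longrightarrow> hd rest \<noteq> hd (S1 @ T @ A)"
    and wFS: "walk_from Q t (F @ S1 @ T @ A)" "wend_from Q t (F @ S1) = \<theta>"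
    and okFS: "\<And>xs. sublist xs (F @ S1 @ T @ A) \<Longrightarrow> reduced xs \<and> no_zero_rel Q xs"
    using follow_band_rotation[OF occ une hu(1)] by blast
  define S where "S = S1 @ T @ A"
  define y where "y = wend_from Q t F"
  define x' where "x' = wend_from Q a (d @ u)"
  have Su: "string_from Q t u" using string_suffix[OF wf Sw] td by simp
  have wrest: "walk_from Q y rest" "wend_from Q y rest = x'" "reduced rest"
    using Su FS(1) td wf by (auto simp: string_from_def walk_from_append reduced_append y_def x'_def)
  have wS: "walk_from Q y S" "wend_from Q y S = t" "wend_from Q y S1 = \<theta>"
    using wFS wendT occ(2) wf by (auto simp: walk_from_append y_def S_def)
  have Sne: "S \<noteq> []" using T_ne by (simp add: S_def)
  have redFS: "reduced (F @ S)" using okFS[of "F @ S1 @ T @ A"] by (simp add: S_def)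
  then have redS: "reduced S" by (simp add: reduced_append)
  have cS: "compat (last S) (hd p, True)"
  proof -
    have "last S = last (B @ A)" using occ(1) T_ne by (cases A rule: rev_cases) (auto simp: S_def)
    then show ?thesis using rot_compat[OF occ(1)] hu by simp
  qed
  have hdr: "hd (dir (p @ P)) = (hd p, True)" "last (dir (p @ P)) = (last P, True)"
    using rI(2,3) by (simp_all add: hd_dir last_dir)
  have no_return: "\<not> reduced (dir (p @ P) @ (revw rest @ S1) @ T @ A @ dir (p @ P))"
  proof
    assume red: "reduced (dir (p @ P) @ (revw rest @ S1) @ T @ A @ dir (p @ P))"
    have "walk_from Q x' (revw rest)" "wend_from Q x' (revw rest) = y"
      using walk_revw[OF wf wrest(1)] wrest(2) by auto
    then have "walk_from Q x' ((revw rest @ S1) @ T @ A)" "wend_from Q x' (revw rest @ S1) = \<theta>"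
      "wend_from Q x' ((revw rest @ S1) @ T @ A) = t"
      using wS wf by (simp_all add: walk_from_append S_def)
    from doze_assembly[OF rI(1,4) rI(5)[folded x'_def] this red] noD show False by blast
  qed
  show ?thesis
  proof (cases "rest = [] \<and> hd S = (last P, False)")
    case True
    define s where "s = d @ F @ [hd S]"
    have uF: "u = F" using FS(1) True by simp
    have "walk_from Q y [hd S]" using wS(1) Sne wf by (cases S) (auto dest: lsrc_ltgt_qv)
    then have walk_s: "walk_from Q a s"
      using Sw uF td wf by (simp add: s_def string_from_def walk_from_append y_def)
    have "compat (last F) (hd S)" using redFS FS(2) Sne by (simp add: reduced_append)
    then have red_s: "reduced s"
      using Sw uF FS(2) by (simp add: s_def string_from_def reduced_append)
    have "F @ S = [hd F] @ (tl F @ [hd S]) @ tl S" using FS(2) Sne by simp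
    then have nz_tail: "no_zero_rel Q (tl F @ [hd S])"
      using okFS[of "tl F @ [hd S]"] by (metis S_def sublist_appendI)
    have nz_dF: "no_zero_rel Q (d @ F)" using Sw uF by (simp add: string_from_def)
    have split: "(d @ F) @ [hd S] = d @ hd F # (tl F @ [hd S])" using FS(2) by simp
    have "snd (hd F) \<noteq> snd (hd S)" using hu uF True by simp
    then have "no_zero_rel Q ((d @ F) @ [hd S])" by (rule nzr_snoc[OF nz_dF nz_tail split])
    with walk_s red_s have "string_from Q a s" by (simp add: s_def string_from_def)
    then show ?thesis using True unfolding ends_in_inverse_def by (intro exI[of _ s]) (simp add: s_def)
  next
    case False
    have "reduced (revw rest @ S)"
      by (rule reduced_appI) (use wrest(3) redS sep in \<open>auto simp: last_revw compat_iff S_def\<close>)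
    then have r1: "reduced ((revw rest @ S) @ dir (p @ P))"
      by (rule reduced_appI[OF _ reduced_dir]) (use cS Sne hdr in simp)
    have c1: "compat (last P, True) (hd ((revw rest @ S) @ dir (p @ P)))"
    proof (cases "rest = []")
      case True then show ?thesis using False Sne by (simp add: compat_iff linv_def)
    next
      case ne: False
      then have "last rest = last (d @ u)" using FS(1) by simp
      then show ?thesis using ne lw by (simp add: hd_revw compat_iff)
    qed
    have "reduced (dir (p @ P) @ ((revw rest @ S) @ dir (p @ P)))"
      by (rule reduced_appI[OF reduced_dir r1]) (use c1 hdr in simp)
    with no_return show ?thesis by (simp add: S_def)
  qed
qed

text \<open>Two strings leaving the band vertex v towards the two ends of a relation r must leave v
  by the same letter, and that letter is one of the two band letters at v: otherwise the
  walk  r Y'^-1 (band from v) Y r  (for one of the two directions of the band) is a DOZE.\<close>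

lemma departure_letters:
  assumes noD: "\<not> (\<exists>w. is_DOZE Q w)"
    and rel: "in_I Q r" "r \<noteq> []" "path_from Q t r" "path_end Q t r = x'"
    and Y: "walk_from Q v Y" "wend_from Q v Y = t" "reduced Y"
    and Y': "walk_from Q v Y'" "wend_from Q v Y' = x'" "reduced Y'"
    and occ: "T = A @ B" "wend_from Q \<theta> A = v"
    and cY: "Y \<noteq> [] \<Longrightarrow> compat (last Y) (hd r, True)"
    and cY': "Y' \<noteq> [] \<Longrightarrow> last Y' \<noteq> (last r, True)"
  defines "lo \<equiv> (if Y = [] then (hd r, True) else hd Y)"
    and "lo' \<equiv> (if Y' = [] then (last r, False) else hd Y')"
  shows "lo = lo' \<and> (lo = hd (B @ A) \<or> lo = linv (last (B @ A)))"
proof -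
  interpret inv: band_at Q \<theta> "revw T" by unfold_locales (simp_all add: wf inv_band)
  define li where "li = linv lo'"
  have X: "walk_from Q x' (revw Y')" "wend_from Q x' (revw Y') = v" "reduced (revw Y')"
    using walk_revw[OF wf Y'(1)] Y'(2,3) by auto
  have c15: "compat (last r, True) (hd (revw Y'))" if "revw Y' \<noteq> []"
    using cY' that by (simp add: hd_revw compat_iff)
  have lXe: "(if revw Y' = [] then (last r, True) else last (revw Y')) = li"
    by (simp add: li_def lo'_def last_revw linv_def)
  have B1: "\<not> (compat li (hd (B @ A)) \<and> compat (last (B @ A)) lo)"
  proof
    assume h: "compat li (hd (B @ A)) \<and> compat (last (B @ A)) lo"
    have "\<exists>w. is_DOZE Q w"
      by (rule doze_at[OF rel X(1,2) Y(1,2) X(3) Y(3) occ]) (use h lXe c15 cY in \<open>simp_all add: lo_def\<close>)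
    with noD show False by blast
  qed
  have occ': "revw T = revw B @ revw A" "wend_from Q \<theta> (revw B) = v"
    using occ wend_revw[OF wf walk_occurrence(1)[OF occ]] walk_occurrence(2)[OF occ] by auto
  have BAne: "B @ A \<noteq> []" using T_ne occ by auto
  have hAB: "hd (revw A @ revw B) = linv (last (B @ A))"
    using hd_revw[OF BAne] by (simp only: revw_append)
  have lAB: "last (revw A @ revw B) = linv (hd (B @ A))"
    using last_revw[OF BAne] by (simp only: revw_append)
  have B2: "\<not> (compat li (linv (last (B @ A))) \<and> compat (linv (hd (B @ A))) lo)"
  proof
    assume h: "compat li (linv (last (B @ A))) \<and> compat (linv (hd (B @ A))) lo"
    have "\<exists>w. is_DOZE Q w"
      by (rule inv.doze_at[OF rel X(1,2) Y(1,2) X(3) Y(3) occ'])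
         (use h lXe c15 cY hAB lAB in \<open>simp_all add: lo_def\<close>)
    with noD show False by blast
  qed
  show ?thesis
    using forced_letter[OF rot_compat[OF occ(1)] B1 B2] unfolding li_def linv_linv by blast
qed

text \<open>Separation: the strings w0 p (to the start of the relation p P) and w' (to its end)
  share a common prefix d ending on the band, after which they either stop or continue by
  the same band letter.\<close>

lemma separation_on_band:
  assumes noD: "\<not> (\<exists>w. is_DOZE Q w)" and a_on: "a \<in> wverts Q (\<theta>, T)"
    and Sw: "string_from Q a (w0 @ dir p)" and td: "wend_from Q a w0 = t"
    and rI: "in_I Q (p @ P)" "p \<noteq> []" "P \<noteq> []" "path_from Q t (p @ P)" "path_end Q t (p @ P) = x'"
    and Sw': "string_from Q a w'" and xw: "wend_from Q a w' = x'"
    and lw: "w' \<noteq> [] \<Longrightarrow> last w' \<noteq> (last P, True)"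
  obtains d u u' A B where "w0 = d @ u" "w' = d @ u'" "u = [] \<or> u' = [] \<or> hd u \<noteq> hd u'"
    "T = A @ B" "wend_from Q \<theta> A = wend_from Q a d"
    "(if u = [] then (hd p, True) else hd u) = (if u' = [] then (last P, False) else hd u')"
    "(if u = [] then (hd p, True) else hd u) = hd (B @ A) \<or>
     (if u = [] then (hd p, True) else hd u) = linv (last (B @ A))"
proof -
  obtain d u u' where lcp: "w0 = d @ u" "w' = d @ u'" "u = [] \<or> u' = [] \<or> hd u \<noteq> hd u'"
    using lcp_exists[of w0 w'] by blast
  have Sw0: "string_from Q a w0" using string_prefix[OF wf Sw] .
  have cw0: "w0 \<noteq> [] \<Longrightarrow> compat (last w0) (hd p, True)"
    using Sw rI(2) by (auto simp: string_from_def reduced_append hd_dir)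
  define on_band where "on_band = (\<lambda>l::'a letter. fst l \<in> warrs (\<theta>, T))"
  define d1 where "d1 = takeWhile on_band d"
  define d2 where "d2 = dropWhile on_band d"
  have dd: "d = d1 @ d2" by (simp add: d1_def d2_def)
  have wd1: "walk_from Q a d1" using Sw0 lcp(1) dd wf by (auto simp: string_from_def walk_from_append)
  define v where "v = wend_from Q a d1"
  have "v \<in> wverts Q (\<theta>, T)"
    unfolding v_def by (rule path_stays[OF a_on _ wd1]) (auto simp: d1_def on_band_def dest: set_takeWhileD)
  then obtain A B where occ: "T = A @ B" "wend_from Q \<theta> A = v" using occurrence by blast
  have Y: "walk_from Q v (d2 @ u)" "wend_from Q v (d2 @ u) = t" "reduced (d2 @ u)"
    using Sw0 lcp(1) dd td wf by (auto simp: string_from_def walk_from_append reduced_append v_def)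
  have Y': "walk_from Q v (d2 @ u')" "wend_from Q v (d2 @ u') = x'" "reduced (d2 @ u')"
    using Sw' lcp(2) dd xw wf by (auto simp: string_from_def walk_from_append reduced_append v_def)
  have cY: "compat (last (d2 @ u)) (hd (p @ P), True)" if "d2 @ u \<noteq> []"
    using cw0 lcp(1) dd rI(2) that by auto
  have cY': "last (d2 @ u') \<noteq> (last (p @ P), True)" if "d2 @ u' \<noteq> []"
    using lw lcp(2) dd rI(3) that by auto
  have "p @ P \<noteq> []" using rI(2) by simp
  note letters = departure_letters[OF noD rI(1) this rI(4,5) Y Y' occ cY cY']
  have "d2 = []"
  proof (rule ccontr)
    assume ne: "d2 \<noteq> []"
    then have "\<not> on_band (hd d2)" unfolding d2_def by (metis hd_dropWhile)
    moreover have "hd d2 = hd (B @ A) \<or> hd d2 = linv (last (B @ A))" using letters ne by simp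
    ultimately show False using rotation_letters_on_band[OF occ(1)] by (auto simp: on_band_def)
  qed
  then have "wend_from Q a d = v" using dd by (simp add: v_def)
  moreover have "hd (p @ P) = hd p" "last (p @ P) = last P" using rI(2,3) by simp_all
  moreover note letters[unfolded \<open>d2 = []\<close> append_Nil this]
  ultimately show ?thesis using lcp occ by (intro that[of d u u' A B]) metis+
qed

lemma reaching_last_arrow:
  assumes noD: "\<not> (\<exists>w. is_DOZE Q w)" and a_on: "a \<in> wverts Q (\<theta>, T)"
    and Sw: "string_from Q a (w0 @ dir p)" and td: "wend_from Q a w0 = t"
    and rI: "in_I Q (p @ P)" "p \<noteq> []" "P \<noteq> []" "path_from Q t (p @ P)" "path_end Q t (p @ P) = x'"
    and Sw': "string_from Q a w'" and xw: "wend_from Q a w' = x'"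
    and lw: "w' \<noteq> [] \<Longrightarrow> last w' \<noteq> (last P, True)"
  shows "ends_in_inverse Q a (last P)"
proof -
  interpret inv: band_at Q \<theta> "revw T" by unfold_locales (simp_all add: wf inv_band)
  obtain d u u' A B where lcp: "w0 = d @ u" "w' = d @ u'" "u = [] \<or> u' = [] \<or> hd u \<noteq> hd u'"
    and occ: "T = A @ B" "wend_from Q \<theta> A = wend_from Q a d"
    and same: "(if u = [] then (hd p, True) else hd u) = (if u' = [] then (last P, False) else hd u')"
    and band_letter: "(if u = [] then (hd p, True) else hd u) = hd (B @ A) \<or>
      (if u = [] then (hd p, True) else hd u) = linv (last (B @ A))"
    using separation_on_band[OF assms] by blast
  consider (turn) "u \<noteq> []" "u' = []" | (leave) "u = []" "u' \<noteq> []"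
    | (both) "u \<noteq> []" "u' \<noteq> []" | (neither) "u = []" "u' = []" by blast
  then show ?thesis
  proof cases
    case turn
    text \<open>w0 turns back into P: its prefix d followed by the inverse of the last arrow of P.\<close>
    then have hu: "hd u = (last P, False)" using same by simp
    have "string_from Q a (d @ [hd u] @ tl u)"
      using string_prefix[OF wf Sw] lcp(1) turn by simp
    then have "string_from Q a (d @ [hd u])" using string_prefix[OF wf, of a "d @ [hd u]"] by simp
    then show ?thesis using hu unfolding ends_in_inverse_def by (intro exI[of _ "d @ [hd u]"]) simp
  next
    case both then show ?thesis using same lcp(3) by simp
  next
    case neither then show ?thesis using same by simp
  next
    case leave
    text \<open>w0 ends at the band vertex t and w' continues along the band in the direction of p.\<close>
    have hu: "hd u' = (hd p, True)" using same leave by simp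
    have t_eq: "wend_from Q a d = t" using td lcp(1) leave by simp
    have Sw'': "string_from Q a (d @ u')" and lw': "last (d @ u') \<noteq> (last P, True)"
      and rI': "path_end Q t (p @ P) = wend_from Q a (d @ u')"
      using Sw' lw xw rI(5) lcp(2) leave by simp_all
    from band_letter leave hu consider "hd u' = hd (B @ A)" | "hd u' = linv (last (B @ A))" by auto
    then show ?thesis
    proof cases
      case 1
      show ?thesis
        by (rule return_along_band[OF noD Sw'' leave(2) occ(1) _ t_eq 1 hu lw' rI(1-4) rI'])
           (use occ(2) t_eq in simp)
    next
      case 2
      have occ': "revw T = revw B @ revw A" "wend_from Q \<theta> (revw B) = t"
        using occ t_eq wend_revw[OF wf walk_occurrence(1)[OF occ]] walk_occurrence(2)[OF occ] by auto
      have "hd (revw A @ revw B) = linv (last (B @ A))"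
        using hd_revw[of "B @ A"] T_ne occ(1) by (simp only: revw_append) auto
      then show ?thesis
        by (intro inv.return_along_band[OF noD Sw'' leave(2) occ' t_eq _ hu lw' rI(1-4) rI']) (use 2 in simp)
    qed
  qed
qed

lemma last_arrow_in_D:
  assumes noD: "\<not> (\<exists>w. is_DOZE Q w)" and a_on: "a \<in> wverts Q (\<theta>, T)"
    and w: "string_from Q a (w0 @ dir p)" "p \<noteq> []" "in_I Q (p @ P)"
    and P: "P \<noteq> []" "path_from Q (wend_from Q a (w0 @ dir p)) P"
    and w': "string_from Q a w'" "wend_from Q a w' = path_end Q (wend_from Q a (w0 @ dir p)) P"
      "w' \<noteq> [] \<Longrightarrow> last w' \<noteq> (last P, True)"
  shows "last P \<in> D_arr Q (a, [])" "qs Q (last P) \<in> D_obj Q (a, [])"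
proof -
  define t where "t = wend_from Q a w0"
  have "path_from Q t p" "path_end Q t p = wend_from Q a (w0 @ dir p)"
    using w(1) wf by (auto simp: string_from_def walk_from_append t_def walk_dir wend_dir)
  then have "path_from Q t (p @ P)" "path_end Q t (p @ P) = wend_from Q a w'"
    using P(2) w'(2) wf by (simp_all add: path_append path_end_append)
  from reaching_last_arrow[OF noD a_on w(1) t_def[symmetric] w(3,2) P(1) this w'(1) refl w'(3)]
  obtain s where s: "string_from Q a s" "s \<noteq> []" "last s = (last P, False)"
    unfolding ends_in_inverse_def by blast
  show "last P \<in> D_arr Q (a, [])" "qs Q (last P) \<in> D_obj Q (a, [])"
    using last_letter_in_D[OF wf a_qv[OF a_on] s(1,2)] s(3) by simp_all
qed

end

section \<open>Fullness of D(e_a)\<close>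

text \<open>Induction on the length of P: an arrow
  at either end of P that is already known to lie in D(e_a) together with its inner endpoint
  is peeled off.\<close>

lemma (in band_at) paths_in_D:
  assumes noD: "\<not> (\<exists>w. is_DOZE Q w)" and a_on: "a \<in> wverts Q (\<theta>, T)"
    and rel2: "\<forall>r\<in>qrel Q. length r \<ge> 2"
  shows "path_from Q x P \<Longrightarrow> \<not> in_I Q P \<Longrightarrow> x \<in> D_obj Q (a, []) \<Longrightarrow>
         path_end Q x P \<in> D_obj Q (a, []) \<Longrightarrow> set P \<subseteq> D_arr Q (a, [])"
proof (induction "length P" arbitrary: x P rule: less_induct)
  case less
  have aq: "a \<in> qv Q" using a_qv a_on by blast
  show ?case
  proof (cases "P = []")
    case Pne: False
    define x' where "x' = path_end Q x P"
    have peel_first: "set P \<subseteq> D_arr Q (a, [])"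
      if "hd P \<in> D_arr Q (a, [])" "qt Q (hd P) \<in> D_obj Q (a, [])"
    proof -
      have P: "P = hd P # tl P" using Pne by simp
      then have "path_from Q (qt Q (hd P)) (tl P)" "path_end Q (qt Q (hd P)) (tl P) = x'"
        using less.prems(1) unfolding x'_def by (metis path_from.simps(2), metis path_end.simps(2))
      moreover have "\<not> in_I Q (tl P)" using less.prems(2) in_I_mono by (metis sublist_tl)
      ultimately have "set (tl P) \<subseteq> D_arr Q (a, [])"
        using less.hyps[of "tl P" "qt Q (hd P)"] Pne that(2) less.prems(4) by (simp add: x'_def)
      then show ?thesis using that(1) P by (metis insert_subset list.simps(15))
    qed
    have peel_last: "set P \<subseteq> D_arr Q (a, [])"
      if "last P \<in> D_arr Q (a, [])" "qs Q (last P) \<in> D_obj Q (a, [])"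
    proof -
      have P: "P = butlast P @ [last P]" using Pne by simp
      then have "path_from Q x (butlast P @ [last P])" using less.prems(1) by simp
      then have "path_from Q x (butlast P)" "path_end Q x (butlast P) = qs Q (last P)"
        using wf by (simp_all add: path_append)
      moreover have "\<not> in_I Q (butlast P)" using less.prems(2) in_I_mono by (metis P sublist_append_rightI)
      ultimately have "set (butlast P) \<subseteq> D_arr Q (a, [])"
        using less.hyps[of "butlast P" x] Pne less.prems(3) that(2) by simp
      then show ?thesis using that(1) P by (metis insert_subset set_append empty_set list.simps(15)
          Un_insert_right sup_bot.right_neutral)
    qed
    obtain w where w: "string_from Q a w" "wend_from Q a w = x"
      using D_obj_reached_by_string[OF wf less.prems(3)] by blast
    obtain w' where w': "string_from Q a w'" "wend_from Q a w' = x'"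
      using D_obj_reached_by_string[OF wf less.prems(4)] by (auto simp: x'_def)
    show ?thesis
    proof (cases "w \<noteq> [] \<and> last w = (hd P, False)")
      case True
      then show ?thesis using last_letter_in_D[OF wf aq w(1)] peel_first by auto
    next
      case no_turn: False
      show ?thesis
      proof (cases "w' \<noteq> [] \<and> last w' = (last P, True)")
        case True
        then show ?thesis using last_letter_in_D[OF wf aq w'(1)] peel_last by auto
      next
        case no_end: False
        have "string_from Q a (w @ dir P) \<or> (\<exists>w0 p. w = w0 @ dir p \<and> p \<noteq> [] \<and> in_I Q (p @ P))"
          by (rule extend_string_by_path[OF wf rel2 w(1)]) (use w(2) less.prems(1,2) no_turn in auto)
        then show ?thesis
        proof
          assume "string_from Q a (w @ dir P)"
          then show ?thesis using string_in_D[OF wf aq] by (force simp: dir_def)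
        next
          assume "\<exists>w0 p. w = w0 @ dir p \<and> p \<noteq> [] \<and> in_I Q (p @ P)"
          then obtain w0 p where wp: "w = w0 @ dir p" "p \<noteq> []" "in_I Q (p @ P)" by blast
          show ?thesis
            by (rule peel_last; rule last_arrow_in_D[OF noD a_on _ wp(2,3) Pne _ w'(1)])
               (use w w' wp(1) less.prems(1) no_end x'_def in auto)
        qed
      qed
    qed
  qed simp
qed

text \<open>The hypotheses on entering and exiting arrows and on the choice of a are part of the
  setting of the paper; fullness only uses that a lies on a band and that there is no DOZE.\<close>

theorem lemma2p3:
  fixes Q :: "('v, 'a) bquiver" and \<Theta> :: "('v, 'a) walk" and a :: 'v
  assumes "string_algebra Q"
    and "\<not> (\<exists>w. is_DOZE Q w)"
    and "\<exists>B. is_band Q B"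
    and "\<forall>B. is_band Q B \<longrightarrow> \<not> ((\<exists>\<alpha>. exiting Q B \<alpha>) \<and> (\<exists>\<alpha>. entering Q B \<alpha>))"
    and "\<not> (\<exists>B. is_band Q B \<and> qa Q = warrs B \<and> qv Q = wverts Q B)"
    and "is_band Q \<Theta>"
    and "\<not> (\<exists>\<alpha>. entering Q \<Theta> \<alpha>)"
    and "a \<in> wverts Q \<Theta>"
    and "\<forall>\<alpha>\<in>qa Q. qs Q \<alpha> = a \<longrightarrow> \<alpha> \<in> warrs \<Theta>"
  shows "(\<forall>\<alpha>\<in>qa Q. qs Q \<alpha> \<in> D_obj Q (a, []) \<and> qt Q \<alpha> \<in> D_obj Q (a, [])
            \<longrightarrow> \<alpha> \<in> D_arr Q (a, [])) \<and>
         (\<forall>x p. path_from Q x p \<and> \<not> in_I Q p \<and> x \<in> D_obj Q (a, []) \<and>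
            path_end Q x p \<in> D_obj Q (a, []) \<longrightarrow> set p \<subseteq> D_arr Q (a, []))"
proof -
  have wf: "wf_quiver Q" using assms(1) by (auto simp: string_algebra_def wf_quiver_def)
  have rel2: "\<forall>r\<in>qrel Q. length r \<ge> 2" using assms(1) by (auto simp: string_algebra_def)
  interpret band_at Q "fst \<Theta>" "snd \<Theta>" by unfold_locales (use wf assms(6) in simp_all)
  have "a \<in> wverts Q (fst \<Theta>, snd \<Theta>)" using assms(8) by simp
  note paths = paths_in_D[OF assms(2) this rel2]
  have arrows: "\<alpha> \<in> D_arr Q (a, [])"
    if "\<alpha> \<in> qa Q" "qs Q \<alpha> \<in> D_obj Q (a, [])" "qt Q \<alpha> \<in> D_obj Q (a, [])" for \<alpha>
  proof -
    text \<open>A single arrow is a path not in I, since relations have length at least two.\<close>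
    have "\<not> in_I Q [\<alpha>]" using rel2 sublist_length_le by (fastforce simp: in_I_def)
    moreover have "path_from Q (qs Q \<alpha>) [\<alpha>]" using wf that(1) by (simp add: wf_quiver_def)
    ultimately show ?thesis using paths[of "qs Q \<alpha>" "[\<alpha>]"] that(2,3) by simp
  qed
  show ?thesis using arrows paths by auto
qed

end
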